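(* Let $(q_l)_{l\ge1}$ be positive numbers with $q_1=1$ and $0<R:=\lim_{l\to\infty}q_l/q_{l+1}<\infty$, and assume (NEQ): $\tilde f(1)<1$, or $\tilde f(1)=1$ and $\tilde g(1)=\infty$. Let $\rho^*>0$ and let $(z^{(m)})_{m\ge1}\subset X_{0+}$ with $\rho(z^{(m)})=\rho^*$ for all $m$ be a minimizing sequence for $\inf\{\tilde A(z): z\in X_{0+},\ \rho(z)=\rho^*\}$. Then $z^{(m)}\to0$ weak-$*$ in $X$ as $m\to\infty$, i.e. $z^{(m)}_l\to0$ for every $l\in\mathbb{N}$.
   Context: $X=\{z=(z_l)_{l\ge1}:\sum_l l|z_l|<\infty\}$ with norm $\|z\|_X=\sum_l l|z_l|$, $X_{0+}$ its nonnegative elements, $\rho(z)=\sum_l lz_l$, $N(z)=\sum_l z_l$. $X$ is the dual of $\{z: z_l/l\to0\}$; a norm-bounded sequence in $X$ converges weak-$*$ iff it converges componentwise. $\tilde q_l=q_lR^l$, $\tilde f(\mu)=\sum_{l\ge1}\tilde q_l\mu^l$, $\tilde g(\mu)=\sum_{l\ge1}l\tilde q_l\mu^l$, $\tilde f(1)=\sum_l\tilde q_l$, $\tilde g(1)=\sum_l l\tilde q_l$ (values in $(0,\infty]$). For $z\in X_{0+}\setminus\{0\}$, $\tilde A(z)=\sum_l z_l\ln\big(z_l/(\tilde q_lN(z))\big)$ with $0\ln0=0$, and $\tilde A(0)=0$. *)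

theory Defs
  imports "HOL-Analysis.Analysis"
begin

text \<open>Sequences indexed by l >= 1 are represented as functions nat => real;
  the value at index 0 is irrelevant (for elements of X it is required to be 0).\<close>

definition qt :: "(nat \<Rightarrow> real) \<Rightarrow> real \<Rightarrow> nat \<Rightarrow> real" where
  "qt q R l = q l * R ^ l"

text \<open>f~(1) and g~(1) with values in (0, infinity], as extended nonnegative reals.\<close>
definition ft1 :: "(nat \<Rightarrow> real) \<Rightarrow> real \<Rightarrow> ennreal" where
  "ft1 q R = (\<Sum>l. ennreal (qt q R (Suc l)))"

definition gt1 :: "(nat \<Rightarrow> real) \<Rightarrow> real \<Rightarrow> ennreal" where
  "gt1 q R = (\<Sum>l. ennreal (real (Suc l) * qt q R (Suc l)))"

definition X0plus :: "(nat \<Rightarrow> real) set" where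
  "X0plus = {z. z 0 = 0 \<and> (\<forall>l. 0 \<le> z l) \<and> summable (\<lambda>l. real l * z l)}"

definition rho :: "(nat \<Rightarrow> real) \<Rightarrow> real" where
  "rho z = (\<Sum>l. real l * z l)"

definition Nz :: "(nat \<Rightarrow> real) \<Rightarrow> real" where
  "Nz z = (\<Sum>l. z (Suc l))"

text \<open>A~(z) = sum_{l>=1} z_l ln(z_l / (q~_l N(z))), with 0 ln 0 = 0 (automatic, since 0 * _ = 0),
  and A~(0) = 0.\<close>
definition At :: "(nat \<Rightarrow> real) \<Rightarrow> real \<Rightarrow> (nat \<Rightarrow> real) \<Rightarrow> real" where
  "At q R z = (if (\<forall>l\<ge>1. z l = 0) then 0
     else (\<Sum>l. z (Suc l) * ln (z (Suc l) / (qt q R (Suc l) * Nz z))))"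

end

theory Submission
  imports Defs
begin

text \<open>Since z ln (z / y) \<ge> z - y, comparing each term of A~(z) with
  y_l = N(z) q~_l e^(-t l) gives A~(z) \<ge> N(z) (1 - f~(e^(-t))) - t \<rho>(z) for every t > 0.
  Condition (NEQ) yields, for any M > 0, some t > 0 with 1 - f~(e^(-t)) \<ge> M t
  (when f~(1) = 1 this is where g~(1) = \<infinity> enters).
  On the other hand q~_(l+1) / q~_l \<rightarrow> 1, so q~_l decays subexponentially, and putting all the
  mass at a single far site shows that the infimum is \<le> 0.
  Hence N(z^(m)) \<rightarrow> 0 along a minimizing sequence, and 0 \<le> z_l \<le> N(z).\<close>

lemma bounded_below_if_eventually_mono:
  fixes h :: "nat \<Rightarrow> real"
  assumes pos: "\<And>l. 1 \<le> l \<Longrightarrow> 0 < h l"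
    and mono: "eventually (\<lambda>l. h l \<le> h (Suc l)) sequentially"
  shows "\<exists>c>0. \<forall>l\<ge>1. c \<le> h l"
proof -
  obtain L0 where L0: "\<And>l. L0 \<le> l \<Longrightarrow> h l \<le> h (Suc l)"
    using mono by (auto simp: eventually_sequentially)
  define L where "L = max L0 1"
  have tail: "h L \<le> h l" if "L \<le> l" for l
    using lift_Suc_mono_le[of "\<lambda>n. h (n + L)" 0 "l - L"] L0 that by (simp add: L_def)
  define c where "c = Min (h ` {1..L})"
  have "1 \<le> L" by (simp add: L_def)
  then have "0 < c" and c_le: "\<And>l. l \<in> {1..L} \<Longrightarrow> c \<le> h l"
    using pos by (auto simp: c_def)
  moreover have "c \<le> h l" if "1 \<le> l" for l
  proof (cases "l \<le> L")
    case False
    then show ?thesis using c_le[of L] tail[of l] \<open>1 \<le> L\<close> by simp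
  qed (use c_le that in simp)
  ultimately show ?thesis by blast
qed

text \<open>For \<open>w = qt q R\<close>, \<open>laplace_sum w t\<close> is f~(e^(-t)).\<close>

definition laplace_sum :: "(nat \<Rightarrow> real) \<Rightarrow> real \<Rightarrow> real" where
  "laplace_sum w t = (\<Sum>l. w (Suc l) * exp (- t * real (Suc l)))"

lemma half_le_one_minus_exp_neg:
  fixes x :: real
  assumes "0 \<le> x" "x \<le> 1"
  shows "x / 2 \<le> 1 - exp (- x)"
proof -
  have "exp (- x) \<le> 1 / (1 + x)"
    using exp_ge_add_one_self_aux[OF assms(1)] assms by (simp add: exp_minus field_simps)
  also have "\<dots> \<le> 1 - x / 2"
    using assms mult_left_le[of x x] by (simp add: field_simps)
  finally show ?thesis by simp
qed

locale unit_ratio_weights =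
  fixes w :: "nat \<Rightarrow> real"
  assumes pos: "\<And>l. 1 \<le> l \<Longrightarrow> 0 < w l"
    and ratio: "(\<lambda>l. w (Suc l) / w l) \<longlonglongrightarrow> 1"
begin

lemma exp_lower_bound:
  assumes "0 < d"
  shows "\<exists>c>0. \<forall>l\<ge>1. c * exp (- d * real l) \<le> w l"
proof -
  have "eventually (\<lambda>l. exp (- d) < w (Suc l) / w l) sequentially"
    using ratio by (rule order_tendstoD) (use assms in simp)
  then have "eventually (\<lambda>l. w l * exp (d * l) \<le> w (Suc l) * exp (d * Suc l)) sequentially"
    using eventually_ge_at_top[of 1]
  proof eventually_elim
    case (elim l)
    then have "w l * exp (- d) \<le> w (Suc l)"
      using pos[of l] by (simp add: field_simps)
    then have "w l * exp (- d) * exp (d * Suc l) \<le> w (Suc l) * exp (d * Suc l)"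
      by (rule mult_right_mono) simp
    then show ?case
      by (simp add: mult.assoc flip: exp_add) (simp add: algebra_simps)
  qed
  then obtain c where "0 < c" and c: "\<And>l. 1 \<le> l \<Longrightarrow> c \<le> w l * exp (d * l)"
    using bounded_below_if_eventually_mono[of "\<lambda>l. w l * exp (d * l)"] pos by auto
  have "c * exp (- d * real l) \<le> w l" if "1 \<le> l" for l
    using mult_right_mono[OF c[OF that], of "exp (- d * l)"]
    by (simp add: mult.assoc flip: exp_add)
  then show ?thesis using \<open>0 < c\<close> by blast
qed

lemma neg_ln_le_of_exp_lower_bound:
  assumes "0 < c" "\<And>l. 1 \<le> l \<Longrightarrow> c * exp (- d * real l) \<le> w l" "1 \<le> l"
  shows "- ln (w l) \<le> \<bar>ln c\<bar> + d * real l"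
proof -
  have "ln (c * exp (- d * real l)) \<le> ln (w l)"
    using assms pos[of l] by (subst ln_le_cancel_iff) auto
  then show ?thesis using assms(1) by (simp add: ln_mult)
qed

lemma eventually_neg_ln_le:
  assumes "0 < d"
  shows "eventually (\<lambda>l. - ln (w l) \<le> d * real l) sequentially"
proof -
  obtain c where c: "0 < c" "\<And>l. 1 \<le> l \<Longrightarrow> c * exp (- (d / 2) * real l) \<le> w l"
    using exp_lower_bound[of "d / 2"] assms by auto
  show ?thesis
    using eventually_ge_at_top[of "nat \<lceil>2 * \<bar>ln c\<bar> / d\<rceil> + 1"]
  proof eventually_elim
    case (elim l)
    then have "2 * \<bar>ln c\<bar> / d \<le> real l" by linarith
    then have "\<bar>ln c\<bar> \<le> d / 2 * real l" using assms by (simp add: field_simps)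
    moreover have "- ln (w l) \<le> \<bar>ln c\<bar> + d / 2 * real l"
      using neg_ln_le_of_exp_lower_bound[of c "d / 2" l] c elim by simp
    ultimately show ?case by simp
  qed
qed

lemma summable_laplace_terms:
  assumes "0 < t"
  shows "summable (\<lambda>l. w (Suc l) * exp (- t * real (Suc l)))"
proof -
  have "eventually (\<lambda>l. w (Suc (Suc l)) / w (Suc l) < exp (t / 2)) sequentially"
    using ratio by (subst eventually_sequentially_Suc) (rule order_tendstoD, use assms in auto)
  then obtain L where L: "\<And>l. L \<le> l \<Longrightarrow> w (Suc (Suc l)) / w (Suc l) < exp (t / 2)"
    by (auto simp: eventually_sequentially)
  show ?thesis
  proof (rule summable_ratio_test[of "exp (- t / 2)" L])
    fix n assume "L \<le> n"
    have "w (Suc (Suc n)) \<le> exp (t / 2) * w (Suc n)"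
      using L[OF \<open>L \<le> n\<close>] pos[of "Suc n"] by (simp add: field_simps)
    then have "w (Suc (Suc n)) * exp (- t * Suc (Suc n))
                 \<le> exp (t / 2) * w (Suc n) * exp (- t * Suc (Suc n))"
      by (rule mult_right_mono) simp
    also have "\<dots> = exp (- t / 2) * (w (Suc n) * exp (- t * Suc n))"
      by (simp add: mult_ac flip: exp_add) (simp add: algebra_simps)
    finally show "norm (w (Suc (Suc n)) * exp (- t * Suc (Suc n)))
                    \<le> exp (- t / 2) * norm (w (Suc n) * exp (- t * Suc n))"
      using pos[of "Suc n"] pos[of "Suc (Suc n)"] by simp
  qed (use assms in simp)
qed

lemma laplace_sum_le:
  assumes "summable (\<lambda>l. w (Suc l))" "0 < t"
  shows "laplace_sum w t \<le> (\<Sum>l. w (Suc l))"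
  unfolding laplace_sum_def
  using assms pos by (intro suminf_le summable_laplace_terms) (auto intro: mult_left_le less_imp_le)

lemma laplace_sum_deficit:
  assumes sm: "summable (\<lambda>l. w (Suc l))" and "0 < K"
  shows "(\<Sum>l<K. real (Suc l) * w (Suc l)) / (2 * real K)
           \<le> (\<Sum>l. w (Suc l)) - laplace_sum w (1 / real K)"
proof -
  define t where "t = 1 / real K"
  have "0 < t" using \<open>0 < K\<close> by (simp add: t_def)
  have w_nonneg: "0 \<le> w (Suc l)" for l using pos[of "Suc l"] by simp
  have "(\<Sum>l<K. real (Suc l) * w (Suc l)) / (2 * real K)
          = (\<Sum>l<K. t * real (Suc l) / 2 * w (Suc l))"
    by (simp add: t_def sum_divide_distrib mult.commute)
  also have "\<dots> \<le> (\<Sum>l<K. w (Suc l) - w (Suc l) * exp (- t * real (Suc l)))"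
  proof (rule sum_mono)
    fix l assume "l \<in> {..<K}"
    then have "0 \<le> t * real (Suc l)" "t * real (Suc l) \<le> 1"
      using \<open>0 < t\<close> by (auto simp: t_def field_simps)
    then have "t * real (Suc l) / 2 * w (Suc l) \<le> (1 - exp (- (t * real (Suc l)))) * w (Suc l)"
      by (intro mult_right_mono half_le_one_minus_exp_neg w_nonneg)
    then show "t * real (Suc l) / 2 * w (Suc l) \<le> w (Suc l) - w (Suc l) * exp (- t * real (Suc l))"
      by (simp add: algebra_simps)
  qed
  also have "\<dots> \<le> (\<Sum>l. w (Suc l) - w (Suc l) * exp (- t * real (Suc l)))"
    using w_nonneg \<open>0 < t\<close>
    by (intro sum_le_suminf summable_diff sm summable_laplace_terms) (auto intro: mult_left_le)
  also have "\<dots> = (\<Sum>l. w (Suc l)) - laplace_sum w t"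
    unfolding laplace_sum_def using sm summable_laplace_terms[OF \<open>0 < t\<close>]
    by (rule suminf_diff[symmetric])
  finally show ?thesis by (simp add: t_def)
qed

lemma laplace_sum_gap:
  assumes sm: "summable (\<lambda>l. w (Suc l))"
    and cond: "(\<Sum>l. w (Suc l)) < 1 \<or>
               (\<Sum>l. w (Suc l)) = 1 \<and> \<not> summable (\<lambda>l. real (Suc l) * w (Suc l))"
    and "0 < M"
  shows "\<exists>t>0. M * t \<le> 1 - laplace_sum w t"
  using cond
proof
  assume "(\<Sum>l. w (Suc l)) < 1"
  then have "0 < (1 - (\<Sum>l. w (Suc l))) / M" using \<open>0 < M\<close> by simp
  then show ?thesis
    using laplace_sum_le[OF sm] \<open>0 < M\<close>
    by (intro exI[of _ "(1 - (\<Sum>l. w (Suc l))) / M"]) fastforce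
next
  assume *: "(\<Sum>l. w (Suc l)) = 1 \<and> \<not> summable (\<lambda>l. real (Suc l) * w (Suc l))"
  have "\<exists>K. 2 * M \<le> (\<Sum>l<K. real (Suc l) * w (Suc l))"
  proof (rule ccontr)
    assume "\<nexists>K. 2 * M \<le> (\<Sum>l<K. real (Suc l) * w (Suc l))"
    then have "summable (\<lambda>l. real (Suc l) * w (Suc l))"
      using pos by (intro summableI_nonneg_bounded[where x = "2 * M"]) (auto simp: not_le less_imp_le)
    then show False using * by blast
  qed
  then obtain K where K: "2 * M \<le> (\<Sum>l<K. real (Suc l) * w (Suc l))" ..
  then have "0 < K" using \<open>0 < M\<close> by (cases K) auto
  have "M * (1 / real K) \<le> (\<Sum>l<K. real (Suc l) * w (Suc l)) / (2 * real K)"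
    using K \<open>0 < K\<close> by (simp add: field_simps)
  also have "\<dots> \<le> 1 - laplace_sum w (1 / real K)"
    using laplace_sum_deficit[OF sm \<open>0 < K\<close>] * by simp
  finally show ?thesis using \<open>0 < K\<close> by (intro exI[of _ "1 / real K"]) simp
qed

end

lemma unit_ratio_weights_qt:
  assumes qpos: "\<forall>l\<ge>1. q l > 0" and Rlim: "(\<lambda>l. q l / q (Suc l)) \<longlonglongrightarrow> R" and "0 < R"
  shows "unit_ratio_weights (qt q R)"
proof
  show "0 < qt q R l" if "1 \<le> l" for l
    using qpos that \<open>0 < R\<close> by (simp add: qt_def)
  have "(\<lambda>l. R * inverse (q l / q (Suc l))) \<longlonglongrightarrow> R * inverse R"
    by (intro tendsto_intros Rlim) (use \<open>0 < R\<close> in simp)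
  moreover have
    "eventually (\<lambda>l. R * inverse (q l / q (Suc l)) = qt q R (Suc l) / qt q R l) sequentially"
    using eventually_ge_at_top[of 1]
  proof eventually_elim
    case (elim l)
    then show ?case using qpos \<open>0 < R\<close> by (simp add: qt_def field_simps)
  qed
  ultimately show "(\<lambda>l. qt q R (Suc l) / qt q R l) \<longlonglongrightarrow> 1"
    using \<open>0 < R\<close> by (simp add: tendsto_cong)
qed

lemma NEQ_imp_laplace_sum_gap:
  assumes weights: "unit_ratio_weights (qt q R)"
    and NEQ: "ft1 q R < 1 \<or> (ft1 q R = 1 \<and> gt1 q R = \<infinity>)"
    and "0 < M"
  shows "\<exists>t>0. M * t \<le> 1 - laplace_sum (qt q R) t"
proof -
  have nonneg: "0 \<le> qt q R (Suc l)" for l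
    using unit_ratio_weights.pos[OF weights, of "Suc l"] by simp
  have "ft1 q R \<noteq> top" using NEQ by (auto simp: top_unique)
  then have sm: "summable (\<lambda>l. qt q R (Suc l))"
    unfolding ft1_def by (rule summable_suminf_not_top[OF nonneg])
  have ft1: "ft1 q R = ennreal (\<Sum>l. qt q R (Suc l))"
    unfolding ft1_def by (rule suminf_ennreal2[OF nonneg sm])
  have "\<not> summable (\<lambda>l. real (Suc l) * qt q R (Suc l))" if "gt1 q R = \<infinity>"
    using that suminf_ennreal2[of "\<lambda>l. real (Suc l) * qt q R (Suc l)"] nonneg
    by (auto simp: gt1_def)
  then have "(\<Sum>l. qt q R (Suc l)) < 1 \<or>
      (\<Sum>l. qt q R (Suc l)) = 1 \<and> \<not> summable (\<lambda>l. real (Suc l) * qt q R (Suc l))"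
    using NEQ suminf_nonneg[OF sm nonneg] by (auto simp: ft1 ennreal_less_iff)
  then show ?thesis
    using unit_ratio_weights.laplace_sum_gap[OF weights sm] \<open>0 < M\<close> by blast
qed

lemma X0plus_nonneg: "z \<in> X0plus \<Longrightarrow> 0 \<le> z l"
  by (simp add: X0plus_def)

lemma X0plus_summable_moment:
  assumes "z \<in> X0plus"
  shows "summable (\<lambda>l. real (Suc l) * z (Suc l))"
  using assms summable_Suc_iff[of "\<lambda>l. real l * z l"] by (simp add: X0plus_def)

lemma X0plus_summable:
  assumes "z \<in> X0plus"
  shows "summable (\<lambda>l. z (Suc l))"
proof (rule summable_comparison_test'[OF X0plus_summable_moment[OF assms], of 0])
  fix l
  show "norm (z (Suc l)) \<le> real (Suc l) * z (Suc l)"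
    using X0plus_nonneg[OF assms, of "Suc l"] by (simp add: algebra_simps)
qed

lemma Nz_sums: "z \<in> X0plus \<Longrightarrow> (\<lambda>l. z (Suc l)) sums Nz z"
  unfolding Nz_def by (rule summable_sums[OF X0plus_summable])

lemma rho_sums:
  assumes "z \<in> X0plus"
  shows "(\<lambda>l. real (Suc l) * z (Suc l)) sums rho z"
proof -
  have "(\<lambda>l. real l * z l) sums rho z"
    using assms by (simp add: X0plus_def rho_def summable_sums)
  then show ?thesis
    using assms sums_Suc_iff[of "\<lambda>l. real l * z l" "rho z"] by (simp add: X0plus_def)
qed

lemma Nz_nonneg: "z \<in> X0plus \<Longrightarrow> 0 \<le> Nz z"
  unfolding Nz_def by (intro suminf_nonneg X0plus_summable X0plus_nonneg)

lemma rho_nonneg: "z \<in> X0plus \<Longrightarrow> 0 \<le> rho z"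
proof -
  assume z: "z \<in> X0plus"
  have "0 \<le> real (Suc l) * z (Suc l)" for l using X0plus_nonneg[OF z] by simp
  then show "0 \<le> rho z" using sums_le[OF _ sums_zero rho_sums[OF z]] by blast
qed

lemma le_Nz: "z \<in> X0plus \<Longrightarrow> z (Suc l) \<le> Nz z"
  using sum_le_suminf[OF X0plus_summable, of z "{l}"] X0plus_nonneg by (simp add: Nz_def)

lemma Nz_eq_0_iff:
  assumes "z \<in> X0plus"
  shows "Nz z = 0 \<longleftrightarrow> (\<forall>l\<ge>1. z l = 0)"
proof
  assume "Nz z = 0"
  show "\<forall>l\<ge>1. z l = 0"
  proof (intro allI impI)
    fix l :: nat assume "1 \<le> l"
    then obtain k where "l = Suc k" by (cases l) auto
    then show "z l = 0"
      using le_Nz[OF assms, of k] X0plus_nonneg[OF assms, of l] \<open>Nz z = 0\<close> by simp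
  qed
qed (use Nz_sums[OF assms] sums_unique in fastforce)

lemma diff_le_mult_ln_divide:
  fixes x y :: real
  assumes "0 \<le> x" "0 < y"
  shows "x - y \<le> x * ln (x / y)"
proof (cases "x = 0")
  case False
  then have "0 < x" using assms by simp
  then have "1 - y / x \<le> ln (x / y)"
    using ln_le_minus_one[of "y / x"] assms by (simp add: ln_div)
  then have "x * (1 - y / x) \<le> x * ln (x / y)"
    using \<open>0 < x\<close> by (intro mult_left_mono) auto
  then show ?thesis using \<open>0 < x\<close> by (simp add: algebra_simps)
qed (use assms in simp)

lemma mult_ln_divide_ge:
  fixes x w N t s :: real
  assumes "0 \<le> x" "0 < w" "0 < N"
  shows "x - N * w * exp (- t * s) - t * s * x \<le> x * ln (x / (w * N))"
proof (cases "x = 0")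
  case False
  define y where "y = N * w * exp (- t * s)"
  have "0 < x" "0 < y" using False assms by (auto simp: y_def)
  have "x / (w * N) = x / y * exp (- t * s)"
    using assms by (simp add: y_def field_simps flip: exp_add)
  also have "ln \<dots> = ln (x / y) - t * s"
    using \<open>0 < x\<close> \<open>0 < y\<close> by (subst ln_mult_pos) auto
  finally have "ln (x / (w * N)) = ln (x / y) - t * s" .
  then have "x * ln (x / (w * N)) = x * ln (x / y) - t * s * x"
    by (simp only: right_diff_distrib mult.commute)
  then show ?thesis
    using diff_le_mult_ln_divide[OF assms(1) \<open>0 < y\<close>] by (simp add: y_def)
qed (use assms in simp)

lemma summable_between:
  fixes f g h :: "nat \<Rightarrow> real"
  assumes "summable g" "summable h" "\<And>n. g n \<le> f n" "\<And>n. f n \<le> h n"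
  shows "summable f"
proof -
  have "summable (\<lambda>n. f n - g n)"
    by (rule summable_comparison_test'[OF summable_diff[OF assms(2,1)], of 0]) (use assms in auto)
  then show ?thesis using summable_add[OF _ assms(1)] by fastforce
qed

lemma At_term_ge:
  assumes weights: "unit_ratio_weights (qt q R)" and z: "z \<in> X0plus" and "0 < Nz z"
  shows "z (Suc l) - Nz z * (qt q R (Suc l) * exp (- t * real (Suc l))) - t * (real (Suc l) * z (Suc l))
           \<le> z (Suc l) * ln (z (Suc l) / (qt q R (Suc l) * Nz z))"
  using mult_ln_divide_ge[of "z (Suc l)" "qt q R (Suc l)" "Nz z" t "real (Suc l)"]
    X0plus_nonneg[OF z] unit_ratio_weights.pos[OF weights, of "Suc l"] \<open>0 < Nz z\<close>
  by (simp add: mult.assoc)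

lemma summable_At_terms:
  assumes weights: "unit_ratio_weights (qt q R)" and z: "z \<in> X0plus" and "0 < Nz z"
  shows "summable (\<lambda>l. z (Suc l) * ln (z (Suc l) / (qt q R (Suc l) * Nz z)))"
proof -
  interpret unit_ratio_weights "qt q R" by (fact weights)
  obtain c where c: "0 < c" "\<And>l. 1 \<le> l \<Longrightarrow> c * exp (- 1 * real l) \<le> qt q R l"
    using exp_lower_bound[of 1] by auto
  have upper: "z (Suc l) * ln (z (Suc l) / (qt q R (Suc l) * Nz z))
                 \<le> z (Suc l) * (\<bar>ln c\<bar> + real (Suc l))" for l
  proof (cases "z (Suc l) = 0")
    case False
    then have "0 < z (Suc l)" using X0plus_nonneg[OF z, of "Suc l"] by simp
    then have "ln (z (Suc l) / (qt q R (Suc l) * Nz z)) = ln (z (Suc l) / Nz z) - ln (qt q R (Suc l))"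
      using pos[of "Suc l"] \<open>0 < Nz z\<close> by (simp add: ln_div ln_mult)
    also have "\<dots> \<le> - ln (qt q R (Suc l))"
      using \<open>0 < z (Suc l)\<close> le_Nz[OF z, of l] by simp
    also have "\<dots> \<le> \<bar>ln c\<bar> + real (Suc l)"
      using neg_ln_le_of_exp_lower_bound[OF c, of "Suc l"] by simp
    finally show ?thesis using \<open>0 < z (Suc l)\<close> by (simp add: mult_left_mono)
  qed simp
  have "summable (\<lambda>l. z (Suc l) - Nz z * (qt q R (Suc l) * exp (- 1 * real (Suc l)))
                       - 1 * (real (Suc l) * z (Suc l)))"
    by (intro summable_diff X0plus_summable[OF z] X0plus_summable_moment[OF z] summable_mult
        summable_laplace_terms) simp
  moreover have "summable (\<lambda>l. z (Suc l) * (\<bar>ln c\<bar> + real (Suc l)))"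
    using X0plus_summable_moment[OF z]
    by (simp add: distrib_left summable_add summable_mult2 X0plus_summable[OF z] mult.commute)
  ultimately show ?thesis
    using At_term_ge[OF weights z \<open>0 < Nz z\<close>] upper by (rule summable_between)
qed

lemma At_lower_bound:
  assumes weights: "unit_ratio_weights (qt q R)" and z: "z \<in> X0plus" and "0 < t"
  shows "Nz z * (1 - laplace_sum (qt q R) t) - t * rho z \<le> At q R z"
proof (cases "Nz z = 0")
  case True
  then show ?thesis using Nz_eq_0_iff[OF z] rho_nonneg[OF z] \<open>0 < t\<close> by (simp add: At_def)
next
  case False
  then have "0 < Nz z" using Nz_nonneg[OF z] by simp
  have "(\<lambda>l. qt q R (Suc l) * exp (- t * real (Suc l))) sums laplace_sum (qt q R) t"
    unfolding laplace_sum_def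
    by (rule summable_sums[OF unit_ratio_weights.summable_laplace_terms[OF weights \<open>0 < t\<close>]])
  from sums_diff[OF sums_diff[OF Nz_sums[OF z] sums_mult[OF this, of "Nz z"]]
                    sums_mult[OF rho_sums[OF z], of t]]
  have lower_sums: "(\<lambda>l. z (Suc l) - Nz z * (qt q R (Suc l) * exp (- t * real (Suc l)))
                         - t * (real (Suc l) * z (Suc l)))
                      sums (Nz z - Nz z * laplace_sum (qt q R) t - t * rho z)" .
  have At_sums: "(\<lambda>l. z (Suc l) * ln (z (Suc l) / (qt q R (Suc l) * Nz z))) sums At q R z"
    using summable_sums[OF summable_At_terms[OF weights z \<open>0 < Nz z\<close>]] False Nz_eq_0_iff[OF z]
    by (simp add: At_def)
  from sums_le[OF At_term_ge[OF weights z \<open>0 < Nz z\<close>] lower_sums At_sums]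
  show ?thesis by (simp add: algebra_simps)
qed

lemma At_single_site:
  assumes "1 \<le> L" "0 < \<rho>" "0 < qt q R L"
  defines "z \<equiv> \<lambda>l. if l = L then \<rho> / real L else 0"
  shows "z \<in> X0plus" and "rho z = \<rho>" and "At q R z = - \<rho> / real L * ln (qt q R L)"
proof -
  obtain k where k: "L = Suc k" using \<open>1 \<le> L\<close> by (cases L) auto
  have "(\<lambda>l. real l * z l) = (\<lambda>l. if l = L then \<rho> else 0)"
    using \<open>1 \<le> L\<close> by (auto simp: z_def)
  then have rho_sums: "(\<lambda>l. real l * z l) sums \<rho>"
    using sums_single[of L "\<lambda>_. \<rho>"] by simp
  show "z \<in> X0plus" using assms rho_sums by (auto simp: X0plus_def z_def sums_summable)
  show "rho z = \<rho>" unfolding rho_def using rho_sums by (rule sums_unique[symmetric])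
  have "(\<lambda>l. z (Suc l)) = (\<lambda>l. if l = k then \<rho> / real L else 0)"
    by (auto simp: z_def k)
  then have Nz: "Nz z = \<rho> / real L"
    unfolding Nz_def using sums_single[of k "\<lambda>_. \<rho> / real L"] sums_unique by fastforce
  define v where "v = - \<rho> / real L * ln (qt q R L)"
  have "\<rho> / real L / (qt q R L * (\<rho> / real L)) = inverse (qt q R L)"
    using assms by (simp add: field_simps)
  then have terms: "(\<lambda>l. z (Suc l) * ln (z (Suc l) / (qt q R (Suc l) * Nz z)))
                      = (\<lambda>l. if l = k then v else 0)"
    unfolding Nz using assms by (auto simp: z_def k v_def ln_inverse)
  have "\<not> (\<forall>l\<ge>1. z l = 0)" using assms by (auto simp: z_def)
  show "At q R z = - \<rho> / real L * ln (qt q R L)"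
    unfolding At_def if_not_P[OF \<open>\<not> (\<forall>l\<ge>1. z l = 0)\<close>] terms v_def[symmetric]
    by (rule sums_unique[OF sums_single[of k "\<lambda>_. v"], symmetric])
qed

lemma exists_At_le:
  assumes weights: "unit_ratio_weights (qt q R)" and "0 < \<rho>" "0 < e"
  shows "\<exists>z\<in>X0plus. rho z = \<rho> \<and> At q R z \<le> e"
proof -
  obtain L0 where L0: "\<And>l. L0 \<le> l \<Longrightarrow> - ln (qt q R l) \<le> e / \<rho> * real l"
    using unit_ratio_weights.eventually_neg_ln_le[OF weights, of "e / \<rho>"] assms
    unfolding eventually_sequentially by auto
  define L where "L = Suc L0"
  have L: "- ln (qt q R L) \<le> e / \<rho> * real L" "1 \<le> L"
    using L0[of L] by (simp_all add: L_def)
  have "0 < qt q R L" using unit_ratio_weights.pos[OF weights L(2)] .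
  define z where "z = (\<lambda>l. if l = L then \<rho> / real L else 0)"
  have z: "z \<in> X0plus" "rho z = \<rho>" "At q R z = - \<rho> / real L * ln (qt q R L)"
    unfolding z_def by (rule At_single_site[OF L(2) \<open>0 < \<rho>\<close> \<open>0 < qt q R L\<close>])+
  have "At q R z = \<rho> / real L * (- ln (qt q R L))" using z(3) by simp
  also have "\<dots> \<le> \<rho> / real L * (e / \<rho> * real L)"
    using L \<open>0 < \<rho>\<close> by (intro mult_left_mono) auto
  also have "\<dots> = e" using L(2) \<open>0 < \<rho>\<close> by simp
  finally show ?thesis using z(1,2) by blast
qed

lemma minimizing_Nz_tendsto_zero:
  assumes weights: "unit_ratio_weights (qt q R)"
    and gap: "\<And>M. 0 < M \<Longrightarrow> \<exists>t>0. M * t \<le> 1 - laplace_sum (qt q R) t"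
    and "0 < \<rho>" and zs: "\<forall>m. zs m \<in> X0plus \<and> rho (zs m) = \<rho>"
    and minimizing: "(\<lambda>m. ereal (At q R (zs m))) \<longlonglongrightarrow>
                       (INF z\<in>{z\<in>X0plus. rho z = \<rho>}. ereal (At q R z))"
  shows "(\<lambda>m. Nz (zs m)) \<longlonglongrightarrow> 0"
proof (rule order_tendstoI)
  fix a :: real assume "a < 0"
  have "a < Nz (zs m)" for m
    using Nz_nonneg[of "zs m"] zs \<open>a < 0\<close> by fastforce
  then show "eventually (\<lambda>m. a < Nz (zs m)) sequentially" by simp
next
  fix a :: real assume "0 < a"
  define M where "M = 2 * \<rho> / a"
  have "0 < M" using \<open>0 < a\<close> \<open>0 < \<rho>\<close> by (simp add: M_def)
  then obtain t where t: "0 < t" "M * t \<le> 1 - laplace_sum (qt q R) t"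
    using gap by blast
  obtain z where z: "z \<in> X0plus" "rho z = \<rho>" "At q R z \<le> t * \<rho> / 2"
    using exists_At_le[OF weights \<open>0 < \<rho>\<close>, of "t * \<rho> / 2"] t \<open>0 < \<rho>\<close> by auto
  have "(INF z\<in>{z\<in>X0plus. rho z = \<rho>}. ereal (At q R z)) \<le> ereal (At q R z)"
    using z by (intro INF_lower) auto
  also have "\<dots> < ereal (t * \<rho>)" using z mult_pos_pos[OF t(1) \<open>0 < \<rho>\<close>] by simp
  finally have "eventually (\<lambda>m. ereal (At q R (zs m)) < ereal (t * \<rho>)) sequentially"
    by (rule order_tendstoD(2)[OF minimizing])
  then show "eventually (\<lambda>m. Nz (zs m) < a) sequentially"
  proof eventually_elim
    case (elim m)
    have zm: "zs m \<in> X0plus" "rho (zs m) = \<rho>" using zs by simp_all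
    have "M * t * Nz (zs m) \<le> (1 - laplace_sum (qt q R) t) * Nz (zs m)"
      using t(2) Nz_nonneg[OF zm(1)] by (rule mult_right_mono)
    also have "\<dots> \<le> At q R (zs m) + t * \<rho>"
      using At_lower_bound[OF weights zm(1) t(1)] zm(2) by (simp add: mult.commute)
    also have "\<dots> < M * t * a" using elim \<open>0 < a\<close> by (simp add: M_def mult.commute)
    finally show ?case using \<open>0 < M\<close> t(1) by simp
  qed
qed

theorem corollary14:
  fixes q :: "nat \<Rightarrow> real" and R \<rho>s :: real and zs :: "nat \<Rightarrow> nat \<Rightarrow> real"
  assumes qpos: "\<forall>l\<ge>1. q l > 0"
    and q1: "q 1 = 1"
    and Rlim: "(\<lambda>l. q l / q (Suc l)) \<longlonglongrightarrow> R"
    and Rpos: "0 < R"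
    and NEQ: "ft1 q R < 1 \<or> (ft1 q R = 1 \<and> gt1 q R = \<infinity>)"
    and rhopos: "\<rho>s > 0"
    and zsX: "\<forall>m. zs m \<in> X0plus \<and> rho (zs m) = \<rho>s"
    and minimizing: "(\<lambda>m. ereal (At q R (zs m))) \<longlonglongrightarrow>
                       (INF z\<in>{z\<in>X0plus. rho z = \<rho>s}. ereal (At q R z))"
  shows "\<forall>l\<ge>1. (\<lambda>m. zs m l) \<longlonglongrightarrow> 0"
proof (intro allI impI)
  fix l :: nat assume "1 \<le> l"
  then obtain k where k: "l = Suc k" by (cases l) auto
  have weights: "unit_ratio_weights (qt q R)"
    using qpos Rlim Rpos by (rule unit_ratio_weights_qt)
  have Nz: "(\<lambda>m. Nz (zs m)) \<longlonglongrightarrow> 0"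
    using NEQ_imp_laplace_sum_gap[OF weights NEQ] rhopos zsX minimizing
    by (rule minimizing_Nz_tendsto_zero[OF weights])
  have "0 \<le> zs m l" "zs m l \<le> Nz (zs m)" for m
    using X0plus_nonneg[of "zs m" l] le_Nz[of "zs m" k] zsX unfolding k by simp_all
  then show "(\<lambda>m. zs m l) \<longlonglongrightarrow> 0"
    by (intro tendsto_sandwich[OF _ _ tendsto_const Nz] always_eventually allI)
qed

end
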